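(* Let $a\in[0,\infty)$ and let $t:[0,1]\to[0,\infty]$ and $s:[0,\infty]\to[0,1]$ be continuous and increasing functions such that $G_{t,s}(x,y)=s(t(x)+t(y))$ defines a grouping function $G_{t,s}:[0,1]^2\to[0,1]$. Suppose $t(x)=\frac{a}{2}$ if and only if $x=0$. Then the following are equivalent: (1) $G_{t,s}$ is a t-conorm; (2) $0$ is a neutral element of $G_{t,s}$; (3) $s(t(x)+\frac{a}{2})=x$ for all $x\in[0,1]$.
   Context: "Increasing" means non-decreasing. Arithmetic in $[0,\infty]$ uses $c+\infty=\infty$; continuity on $[0,\infty]$ refers to the usual topology of the extended half-line. A grouping function is a map $G:[0,1]^2\to[0,1]$ that is (G1) commutative, (G2) $G(x,y)=0$ iff $x=y=0$, (G3) $G(x,y)=1$ iff $x=1$ or $y=1$, (G4) increasing in each variable, (G5) continuous. A t-conorm is a commutative, associative map $S:[0,1]^2\to[0,1]$, increasing in each variable, with $S(x,0)=x$ for all $x$. *)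

theory Defs
  imports "HOL-Analysis.Analysis" "HOL-Library.Extended_Nonnegative_Real"
begin

definition grouping_function :: "(real \<Rightarrow> real \<Rightarrow> real) \<Rightarrow> bool" where
  "grouping_function G \<longleftrightarrow>
     (\<forall>x\<in>{0..1}. \<forall>y\<in>{0..1}. G x y \<in> {0..1}) \<and>
     (\<forall>x\<in>{0..1}. \<forall>y\<in>{0..1}. G x y = G y x) \<and>
     (\<forall>x\<in>{0..1}. \<forall>y\<in>{0..1}. G x y = 0 \<longleftrightarrow> x = 0 \<and> y = 0) \<and>
     (\<forall>x\<in>{0..1}. \<forall>y\<in>{0..1}. G x y = 1 \<longleftrightarrow> x = 1 \<or> y = 1) \<and>
     (\<forall>x\<in>{0..1}. \<forall>x'\<in>{0..1}. \<forall>y\<in>{0..1}. x \<le> x' \<longrightarrow> G x y \<le> G x' y) \<and>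
     (\<forall>x\<in>{0..1}. \<forall>y\<in>{0..1}. \<forall>y'\<in>{0..1}. y \<le> y' \<longrightarrow> G x y \<le> G x y') \<and>
     continuous_on ({0..1} \<times> {0..1}) (\<lambda>(x, y). G x y)"

definition t_conorm :: "(real \<Rightarrow> real \<Rightarrow> real) \<Rightarrow> bool" where
  "t_conorm S \<longleftrightarrow>
     (\<forall>x\<in>{0..1}. \<forall>y\<in>{0..1}. S x y \<in> {0..1}) \<and>
     (\<forall>x\<in>{0..1}. \<forall>y\<in>{0..1}. S x y = S y x) \<and>
     (\<forall>x\<in>{0..1}. \<forall>y\<in>{0..1}. \<forall>z\<in>{0..1}. S (S x y) z = S x (S y z)) \<and>
     (\<forall>x\<in>{0..1}. \<forall>x'\<in>{0..1}. \<forall>y\<in>{0..1}. x \<le> x' \<longrightarrow> S x y \<le> S x' y) \<and>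
     (\<forall>x\<in>{0..1}. \<forall>y\<in>{0..1}. \<forall>y'\<in>{0..1}. y \<le> y' \<longrightarrow> S x y \<le> S x y') \<and>
     (\<forall>x\<in>{0..1}. S x 0 = x)"

definition neutral_element :: "real \<Rightarrow> (real \<Rightarrow> real \<Rightarrow> real) \<Rightarrow> bool" where
  "neutral_element e F \<longleftrightarrow> (\<forall>x\<in>{0..1}. F x e = x \<and> F e x = x)"

end

theory Submission
  imports Defs
begin

text \<open>Write \<open>G x y = s (t x + t y)\<close> and \<open>c = t 0\<close>. Neutrality of 0 is literally the identity
  \<open>s (t x + c) = x\<close>, so \<open>s\<close> inverts \<open>t + c\<close> on \<open>[0,1]\<close>. By the intermediate value theorem every
  \<open>u \<in> [2c, t 1 + c)\<close> has the form \<open>t w + c\<close>, whence \<open>t (s u) + c = u\<close>; since \<open>G x y < 1\<close> for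
  \<open>x, y < 1\<close>, this gives \<open>t (G x y) + c = t x + t y\<close>. Both bracketings of \<open>G x (G y z)\<close> then satisfy
  \<open>t (\<dots>) + 2c = t x + t y + t z\<close>; cancelling the finite \<open>2c\<close> and applying \<open>s (\<cdot> + c)\<close> gives
  associativity, while arguments equal to 1 are absorbed on both sides.\<close>

lemma t_conorm_neutral_zero:
  assumes "t_conorm S"
  shows "neutral_element 0 S"
  using assms unfolding t_conorm_def neutral_element_def by auto

lemma neutral_zero_additive_iff:
  fixes t :: "real \<Rightarrow> ennreal" and s :: "ennreal \<Rightarrow> real"
  shows "neutral_element 0 (\<lambda>x y. s (t x + t y)) \<longleftrightarrow> (\<forall>x\<in>{0..1}. s (t x + t 0) = x)"
  unfolding neutral_element_def by (auto simp: add.commute)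

lemma additive_generator_t_of_s:
  fixes t :: "real \<Rightarrow> ennreal" and s :: "ennreal \<Rightarrow> real"
  assumes t_cont: "continuous_on {0..1} t" and s_mono: "mono s"
    and inverse: "\<forall>x\<in>{0..1}. s (t x + t 0) = x"
    and lower: "t 0 + t 0 \<le> u" and below_one: "s u < 1"
  shows "t (s u) + t 0 = u"
proof -
  have "u < t 1 + t 0"
  proof (rule ccontr)
    assume "\<not> u < t 1 + t 0"
    then have "s (t 1 + t 0) \<le> s u" using s_mono by (simp add: mono_def)
    then show False using inverse below_one by simp
  qed
  moreover have "continuous_on {0..1} (\<lambda>w. t w + t 0)"
    by (intro continuous_on_add t_cont continuous_on_const)
  ultimately obtain w where w: "0 \<le> w" "w \<le> 1" "t w + t 0 = u"
    using IVT'[of "\<lambda>w. t w + t 0" 0 u 1] lower by (auto intro: less_imp_le)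
  then have "s u = w" using inverse by auto
  then show ?thesis using w by simp
qed

lemma additive_generator_t_of_G:
  fixes t :: "real \<Rightarrow> ennreal" and s :: "ennreal \<Rightarrow> real"
  assumes t_cont: "continuous_on {0..1} t" and t_mono: "mono_on {0..1} t" and s_mono: "mono s"
    and G: "grouping_function (\<lambda>x y. s (t x + t y))"
    and inverse: "\<forall>x\<in>{0..1}. s (t x + t 0) = x"
    and x: "x \<in> {0..1}" "x < 1" and y: "y \<in> {0..1}" "y < 1"
  shows "t (s (t x + t y)) + t 0 = t x + t y" and "s (t x + t y) < 1"
proof -
  have "s (t x + t y) \<le> 1" and "s (t x + t y) \<noteq> 1"
    using G x y unfolding grouping_function_def by auto
  then show below_one: "s (t x + t y) < 1" by simp
  have "t 0 + t 0 \<le> t x + t y"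
    by (intro add_mono mono_onD[OF t_mono]) (use x y in auto)
  then show "t (s (t x + t y)) + t 0 = t x + t y"
    using additive_generator_t_of_s[OF t_cont s_mono inverse] below_one by blast
qed

lemma additive_generator_assoc:
  fixes t :: "real \<Rightarrow> ennreal" and s :: "ennreal \<Rightarrow> real"
  defines "G \<equiv> \<lambda>x y. s (t x + t y)"
  assumes t_cont: "continuous_on {0..1} t" and t_mono: "mono_on {0..1} t" and s_mono: "mono s"
    and t0_finite: "t 0 \<noteq> \<infinity>"
    and grouping: "grouping_function G"
    and inverse: "\<forall>x\<in>{0..1}. s (t x + t 0) = x"
    and xyz: "x \<in> {0..1}" "y \<in> {0..1}" "z \<in> {0..1}"
  shows "G (G x y) z = G x (G y z)"
proof -
  have range: "G u v \<in> {0..1}" if "u \<in> {0..1}" "v \<in> {0..1}" for u v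
    using grouping that unfolding grouping_function_def by auto
  show ?thesis
  proof (cases "x = 1 \<or> y = 1 \<or> z = 1")
    case True
    have "G u v = 1" if "u \<in> {0..1}" "v \<in> {0..1}" "u = 1 \<or> v = 1" for u v
      using grouping that unfolding grouping_function_def by auto
    then show ?thesis using True range xyz by metis
  next
    case False
    then have "x < 1" "y < 1" "z < 1" using xyz by auto
    note t_of_G = additive_generator_t_of_G[OF t_cont t_mono s_mono grouping[unfolded G_def] inverse]
    have "t (G (G x y) z) + t 0 + t 0 = t x + t y + t z"
      using t_of_G[of x y] t_of_G[of "G x y" z] range[of x y] \<open>x < 1\<close> \<open>y < 1\<close> \<open>z < 1\<close> xyz
      unfolding G_def by (metis add.assoc add.commute)
    moreover have "t (G x (G y z)) + t 0 + t 0 = t x + t y + t z"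
      using t_of_G[of y z] t_of_G[of x "G y z"] range[of y z] \<open>x < 1\<close> \<open>y < 1\<close> \<open>z < 1\<close> xyz
      unfolding G_def by (metis add.assoc add.commute)
    ultimately have "(t 0 + t 0) + t (G (G x y) z) = (t 0 + t 0) + t (G x (G y z))"
      by (simp add: ac_simps)
    then have "t (G (G x y) z) = t (G x (G y z))"
      using t0_finite by (simp add: ennreal_add_left_cancel)
    then have "s (t (G (G x y) z) + t 0) = s (t (G x (G y z)) + t 0)" by simp
    then show ?thesis using inverse range xyz by simp
  qed
qed

lemma additive_generator_t_conorm:
  fixes t :: "real \<Rightarrow> ennreal" and s :: "ennreal \<Rightarrow> real"
  assumes "continuous_on {0..1} t" "mono_on {0..1} t" "mono s" "t 0 \<noteq> \<infinity>"
    and grouping: "grouping_function (\<lambda>x y. s (t x + t y))"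
    and inverse: "\<forall>x\<in>{0..1}. s (t x + t 0) = x"
  shows "t_conorm (\<lambda>x y. s (t x + t y))"
  using grouping inverse additive_generator_assoc[OF assms]
  unfolding t_conorm_def grouping_function_def by simp

theorem theorem6p3:
  fixes a :: real and t :: "real \<Rightarrow> ennreal" and s :: "ennreal \<Rightarrow> real"
  assumes "a \<ge> 0"
    and "continuous_on {0..1} t" and "mono_on {0..1} t"
    and "continuous_on UNIV s" and "mono s" and "\<forall>u. s u \<in> {0..1}"
    and "grouping_function (\<lambda>x y. s (t x + t y))"
    and "\<forall>x\<in>{0..1}. t x = ennreal (a / 2) \<longleftrightarrow> x = 0"
  shows "(t_conorm (\<lambda>x y. s (t x + t y)) \<longleftrightarrow> neutral_element 0 (\<lambda>x y. s (t x + t y))) \<and>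
         (neutral_element 0 (\<lambda>x y. s (t x + t y)) \<longleftrightarrow>
            (\<forall>x\<in>{0..1}. s (t x + ennreal (a / 2)) = x))"
proof -
  have t0: "t 0 = ennreal (a / 2)" using assms(8) by auto
  have "neutral_element 0 (\<lambda>x y. s (t x + t y)) \<Longrightarrow> t_conorm (\<lambda>x y. s (t x + t y))"
    using additive_generator_t_conorm[OF assms(2,3,5) _ assms(7)] t0
    by (simp add: neutral_zero_additive_iff)
  then show ?thesis
    using t_conorm_neutral_zero neutral_zero_additive_iff[of s t] t0 by auto
qed

end
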